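(* If $\det\begin{pmatrix}\mathcal{D}_\alpha X^I\\ X^I\end{pmatrix}\neq 0$ and $\mathcal{D}_{\bar\alpha}\begin{pmatrix}X^I\\ F_I\end{pmatrix}=0$, then there exist functions $\tilde F_I(X^J)$ such that $\tilde F_I(X^J(z,\bar z))=F_I(z,\bar z)$ and $\tilde F_I=X^J\partial_J\tilde F_I$ (i.e. $\tilde F_I$ is homogeneous of first degree in $X$).
   Context: $X^I(z,\bar z)$, $F_I(z,\bar z)$ ($I=0,\dots,n$) are components of a $2(n+1)$-vector over an $n$-dimensional Kähler manifold with coordinates $z^\alpha$ and Kähler potential $K$; $\mathcal{D}_\alpha=\partial_\alpha+\tfrac12\partial_\alpha K$ and $\mathcal{D}_{\bar\alpha}=\partial_{\bar\alpha}-\tfrac12\partial_{\bar\alpha}K$ act on them; $X^0\neq0$ is assumed; $\partial_J=\partial/\partial X^J$. *)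

theory Defs
  imports "HOL-Analysis.Analysis"
begin

text \<open>Symplectic-vector components are indexed by 'n option:
  None plays the role of I = 0 and Some alpha of I = alpha.\<close>

definition wirt :: "(complex^'n \<Rightarrow> complex) \<Rightarrow> 'n \<Rightarrow> complex^'n \<Rightarrow> complex" where
  "wirt f a z = (frechet_derivative f (at z) (axis a 1)
                 - \<i> * frechet_derivative f (at z) (axis a \<i>)) / 2"

definition cwirt :: "(complex^'n \<Rightarrow> complex) \<Rightarrow> 'n \<Rightarrow> complex^'n \<Rightarrow> complex" where
  "cwirt f a z = (frechet_derivative f (at z) (axis a 1)
                 + \<i> * frechet_derivative f (at z) (axis a \<i>)) / 2"

definition covD :: "(complex^'n \<Rightarrow> real) \<Rightarrow> (complex^'n \<Rightarrow> complex) \<Rightarrow> 'n \<Rightarrow> complex^'n \<Rightarrow> complex" where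
  "covD K f a z = wirt f a z + wirt (\<lambda>w. complex_of_real (K w)) a z * f z / 2"

definition covDbar :: "(complex^'n \<Rightarrow> real) \<Rightarrow> (complex^'n \<Rightarrow> complex) \<Rightarrow> 'n \<Rightarrow> complex^'n \<Rightarrow> complex" where
  "covDbar K f a z = cwirt f a z - cwirt (\<lambda>w. complex_of_real (K w)) a z * f z / 2"

definition XMatrix :: "(complex^'n \<Rightarrow> real) \<Rightarrow> (complex^'n \<Rightarrow> complex^'n option) \<Rightarrow> complex^'n
     \<Rightarrow> complex^'n option^'n option" where
  "XMatrix K X z = (\<chi> r c. case r of None \<Rightarrow> X z $ c | Some a \<Rightarrow> covD K (\<lambda>w. X w $ c) a z)"

definition holo_on :: "(complex^'m \<Rightarrow> complex) \<Rightarrow> (complex^'m) set \<Rightarrow> bool" where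
  "holo_on g W \<longleftrightarrow> (\<forall>x\<in>W. \<exists>D::complex^'m. (g has_derivative (\<lambda>h. \<Sum>J\<in>UNIV. h $ J * D $ J)) (at x))"

definition cpartial :: "(complex^'m \<Rightarrow> complex) \<Rightarrow> 'm \<Rightarrow> complex^'m \<Rightarrow> complex" where
  "cpartial g J x = frechet_derivative g (at x) (axis J 1)"

end

theory Submission
  imports Defs "HOL-Complex_Analysis.Cauchy_Integral_Formula"
begin

text \<open>Write X = e^(K/2) h and F = e^(K/2) f; the equations D_alphabar X = D_alphabar F = 0
  say exactly that h and f are holomorphic.  On C^(n+1) with coordinates (lambda, z) consider
  the cone maps Phi(lambda, z) = lambda h(z) and G(lambda, z) = lambda f(z), so that
  X(z) = Phi(e^(K(z)/2), z).  Up to invertible row operations, the differential of Phi at that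
  point is the matrix with rows X and D_alpha X, so the determinant condition makes Phi a local
  diffeomorphism (holomorphic maps are C^1 by Cauchy's integral formula, so the real inverse
  function theorem applies).  The inverse has complex-linear differential, hence
  Ft = G o Phi^(-1) is holomorphic with Ft(X) = F.  Homogeneity comes from linearity in lambda:
  dPhi and dG send the Euler vector lambda d/dlambda to Phi and G, so dFt(x) x = Ft(x).\<close>

lemma bounded_linear_axis: "bounded_linear (axis a :: 'a::euclidean_space \<Rightarrow> 'a^'n)"
  unfolding linear_conv_bounded_linear[symmetric]
  by (rule linearI) (auto simp: axis_def vec_eq_iff)

lemma norm_axis: "norm (axis a x :: 'a::real_normed_vector^'n) = norm x"
proof -
  have "(\<Sum>i\<in>UNIV. (norm (axis a x $ i))\<^sup>2) = (norm x)\<^sup>2"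
    by (simp add: axis_def if_distrib[of norm] if_distrib[of "\<lambda>t. t\<^sup>2"] cong: if_cong)
  then show ?thesis
    by (simp add: norm_vec_def L2_set_def)
qed

lemma axis_zero [simp]: "axis a 0 = 0"
  by (simp add: vec_eq_iff axis_def)

lemma sum_axis_nth_mult: "(\<Sum>b\<in>UNIV. axis a x $ b * g b) = (x :: 'a::semiring_0) * g a"
  by (simp add: axis_def if_distrib[of "\<lambda>t. t * _"] cong: if_cong)

lemma axis_complex_scale: "axis a (c :: complex) = c *s axis a 1"
  by (simp add: vec_eq_iff axis_def)

lemma sum_axis_vec_nth: "(\<Sum>i\<in>UNIV. axis i (x $ i)) = (x :: 'a::comm_monoid_add^'n)"
  by (simp add: vec_eq_iff axis_def sum.delta)

lemma linear_complex_eq_sum_axis: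
  fixes D :: "complex^'n \<Rightarrow> complex"
  assumes "linear D" and "\<And>a. D (axis a \<i>) = \<i> * D (axis a 1)"
  shows "D v = (\<Sum>a\<in>UNIV. v $ a * D (axis a 1))"
proof -
  have axis_scale: "D (axis a c) = c * D (axis a 1)" for a c
  proof -
    have "axis a c = Re c *\<^sub>R axis a 1 + Im c *\<^sub>R axis a \<i>"
      by (simp add: vec_eq_iff axis_def complex_eq_iff)
    then have "D (axis a c) = Re c *\<^sub>R D (axis a 1) + Im c *\<^sub>R D (axis a \<i>)"
      using assms(1) by (simp add: linear_add linear_scale)
    then show ?thesis
      using assms(2) by (simp add: scaleR_conv_of_real complex_eq_iff algebra_simps)
  qed
  have "D v = (\<Sum>a\<in>UNIV. D (axis a (v $ a)))"
    using linear_sum[OF assms(1), of "\<lambda>a. axis a (v $ a)" UNIV] by (simp only: sum_axis_vec_nth)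
  also have "\<dots> = (\<Sum>a\<in>UNIV. v $ a * D (axis a 1))"
    by (rule sum.cong[OF refl axis_scale])
  finally show ?thesis .
qed

lemma inv_scale_commute:
  fixes L :: "'a::field^'m \<Rightarrow> 'a^'k"
  assumes "bij L" and "\<And>w. L (c *s w) = c *s L w"
  shows "inv L (c *s w) = c *s inv L w"
  by (metis assms bij_inv_eq_iff)

lemma vector_matrix_mult_eq_0_imp_eq_0:
  fixes M :: "'a::field^'k^'k"
  assumes "det M \<noteq> 0" and "c v* M = 0"
  shows "c = 0"
proof -
  obtain B where "M ** B = mat 1"
    using assms(1) invertible_det_nz invertible_right_inverse by blast
  then have "c = (c v* M) v* B"
    by (simp add: vector_matrix_mul_assoc)
  then show ?thesis
    using assms(2) by simp
qed

lemma has_derivative_vecI: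
  fixes f :: "'a::real_normed_vector \<Rightarrow> 'b::euclidean_space^'n"
  assumes "\<And>i. ((\<lambda>x. f x $ i) has_derivative (\<lambda>v. f' v $ i)) F"
  shows "(f has_derivative f') F"
proof -
  have "((\<lambda>x. \<Sum>i\<in>UNIV. axis i (f x $ i)) has_derivative (\<lambda>v. \<Sum>i\<in>UNIV. axis i (f' v $ i))) F"
    by (intro has_derivative_sum bounded_linear.has_derivative[OF bounded_linear_axis] assms)
  then show ?thesis
    by (simp add: sum_axis_vec_nth)
qed

lemma continuous_on_circlepath_integral_param:
  fixes g :: "'a::topological_space \<Rightarrow> complex \<Rightarrow> complex"
  assumes "0 \<le> r" and "continuous_on (T \<times> sphere 0 r) (\<lambda>(z, w). g z w)"
  shows "continuous_on T (\<lambda>z. contour_integral (circlepath 0 r) (g z))"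
proof -
  have "continuous_on (T \<times> cbox 0 1) (\<lambda>x. (fst x, circlepath 0 r (snd x)))"
    unfolding circlepath by (intro continuous_intros)
  moreover have "(\<lambda>x. (fst x, circlepath 0 r (snd x))) ` (T \<times> cbox 0 1) \<subseteq> T \<times> sphere 0 r"
    using assms(1) by (auto simp: circlepath norm_mult)
  ultimately have "continuous_on (T \<times> cbox 0 1) (\<lambda>x. (\<lambda>(z, w). g z w) (fst x, circlepath 0 r (snd x)))"
    by (rule continuous_on_compose2[OF assms(2)])
  then have "continuous_on (T \<times> cbox 0 1) (\<lambda>x. g (fst x) (circlepath 0 r (snd x)))"
    by simp
  then have "continuous_on (T \<times> cbox 0 1)
      (\<lambda>(z, t). g z (circlepath 0 r t) * vector_derivative (circlepath 0 r) (at t))"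
    unfolding vector_derivative_circlepath split_beta by (intro continuous_intros)
  then show ?thesis
    unfolding contour_integral_integral cbox_interval[symmetric]
    by (rule integral_continuous_on_param)
qed

lemma inverse_function_theorem_inj:
  fixes f :: "'a::euclidean_space \<Rightarrow> 'a"
  assumes "open S" and derf: "\<And>y. y \<in> S \<Longrightarrow> (f has_derivative f' y) (at y)"
    and contf: "\<And>w. continuous_on S (\<lambda>y. f' y w)" and "y0 \<in> S" and "inj (f' y0)"
  obtains S' W g where "open S'" "S' \<subseteq> S" "y0 \<in> S'" "open W" "homeomorphism S' W f g"
    "\<And>x. x \<in> W \<Longrightarrow> (g has_derivative inv (f' (g x))) (at x)"
    "\<And>x. x \<in> W \<Longrightarrow> bij (f' (g x))"
proof -
  define F where "F y = Blinfun (f' y)" for y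
  have F: "blinfun_apply (F y) = f' y" if "y \<in> S" for y
    using derf[OF that] by (auto simp: F_def intro: bounded_linear_Blinfun_apply)
  have "continuous_on S F"
    by (rule continuous_on_blinfun_componentwise) (simp add: F contf cong: continuous_on_cong)
  moreover obtain g0 where "linear g0" "g0 \<circ> f' y0 = id"
    using linear_injective_left_inverse derf[OF \<open>y0 \<in> S\<close>] \<open>inj (f' y0)\<close>
    by (metis has_derivative_linear)
  then have "Blinfun g0 o\<^sub>L F y0 = id_blinfun"
    using F[OF \<open>y0 \<in> S\<close>]
    by (intro blinfun_eqI) (simp add: bounded_linear_Blinfun_apply linear_conv_bounded_linear pointfree_idE)
  ultimately obtain S' W g g' where "open S'" "S' \<subseteq> S" "y0 \<in> S'" "open W" "homeomorphism S' W f g"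
    "\<And>x. x \<in> W \<Longrightarrow> (g has_derivative g' x) (at x)"
    "\<And>x. x \<in> W \<Longrightarrow> g' x = inv (blinfun_apply (F (g x)))"
    "\<And>x. x \<in> W \<Longrightarrow> bij (blinfun_apply (F (g x)))"
    using inverse_function_theorem[OF \<open>open S\<close> _ _ \<open>y0 \<in> S\<close>, of f F] derf F by metis
  moreover have "g x \<in> S" if "x \<in> W" for x
    using \<open>homeomorphism S' W f g\<close> \<open>S' \<subseteq> S\<close> that homeomorphism_image2 by blast
  ultimately show thesis
    using that F by (metis (no_types))
qed

definition holo_at :: "(complex^'n \<Rightarrow> complex) \<Rightarrow> complex^'n \<Rightarrow> bool" where
  "holo_at u z \<longleftrightarrow> (u has_derivative (\<lambda>v. \<Sum>a\<in>UNIV. v $ a * cpartial u a z)) (at z)"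

lemma holo_atI:
  assumes "(u has_derivative D) (at z)" and "\<And>a. D (axis a \<i>) = \<i> * D (axis a 1)"
  shows "holo_at u z"
proof -
  have "frechet_derivative u (at z) = D"
    using assms(1) by (rule frechet_derivative_at[symmetric])
  then show ?thesis
    unfolding holo_at_def cpartial_def \<open>frechet_derivative u (at z) = D\<close>
    by (intro has_derivative_eq_rhs[OF assms(1)] ext linear_complex_eq_sum_axis
        has_derivative_linear[OF assms(1)] assms(2))
qed

lemma holo_at_continuous: "holo_at u z \<Longrightarrow> isCont u z"
  unfolding holo_at_def by (rule has_derivative_continuous)

lemma holo_onI: "(\<And>x. x \<in> W \<Longrightarrow> holo_at g x) \<Longrightarrow> holo_on g W"
  unfolding holo_on_def holo_at_def by (auto intro!: exI[of _ "\<chi> J. cpartial g J _"])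

lemma holo_at_Euler:
  assumes "holo_at g x" and "frechet_derivative g (at x) x = g x"
  shows "g x = (\<Sum>J\<in>UNIV. x $ J * cpartial g J x)"
proof -
  have "frechet_derivative g (at x) = (\<lambda>v. \<Sum>J\<in>UNIV. v $ J * cpartial g J x)"
    using assms(1) unfolding holo_at_def by (rule frechet_derivative_at[symmetric])
  then show ?thesis
    using assms(2) by simp
qed

lemma holo_at_vec_nth:
  assumes "(F has_derivative L) (at x)" and "\<And>v. L (\<i> *s v) = \<i> *s L v"
  shows "holo_at (\<lambda>y. F y $ I) x"
proof (rule holo_atI)
  show "((\<lambda>y. F y $ I) has_derivative (\<lambda>v. L v $ I)) (at x)"
    by (rule bounded_linear.has_derivative[OF bounded_linear_vec_nth assms(1)])
qed (simp add: axis_complex_scale[of _ \<i>] assms(2))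

lemma holo_at_line:
  assumes "holo_at u (z + axis a w)"
  shows "((\<lambda>w. u (z + axis a w)) has_field_derivative cpartial u a (z + axis a w)) (at w)"
proof -
  have "((\<lambda>w. z + axis a w) has_derivative axis a) (at w)"
    by (rule derivative_eq_intros bounded_linear.has_derivative[OF bounded_linear_axis] | simp)+
  from has_derivative_compose[OF this assms[unfolded holo_at_def]]
  have "((\<lambda>w. u (z + axis a w)) has_derivative
      (\<lambda>h. \<Sum>b\<in>UNIV. axis a h $ b * cpartial u b (z + axis a w))) (at w)"
    by (simp add: o_def)
  moreover have "(\<lambda>h. \<Sum>b\<in>UNIV. axis a h $ b * cpartial u b (z + axis a w))
      = (*) (cpartial u a (z + axis a w))"
    by (simp add: sum_axis_nth_mult fun_eq_iff mult.commute)
  ultimately show ?thesis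
    by (simp add: has_field_derivative_def)
qed

lemma cpartial_eq_circlepath_integral:
  fixes u :: "complex^'n \<Rightarrow> complex"
  assumes "0 < r" and "\<And>w. norm w \<le> r \<Longrightarrow> holo_at u (z + axis a w)"
  shows "cpartial u a z
    = contour_integral (circlepath 0 r) (\<lambda>w. u (z + axis a w) / w\<^sup>2) / (2 * of_real pi * \<i>)"
proof -
  define \<phi> where "\<phi> = (\<lambda>w. u (z + axis a w))"
  have d: "(\<phi> has_field_derivative cpartial u a (z + axis a w)) (at w)" if "norm w \<le> r" for w
    unfolding \<phi>_def using assms(2)[OF that] by (rule holo_at_line)
  have "continuous_on (cball 0 r) \<phi>"
    using d by (meson DERIV_continuous continuous_at_imp_continuous_on mem_cball_0)
  moreover have "\<phi> holomorphic_on ball 0 r"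
    using d by (meson holomorphic_on_def field_differentiable_def field_differentiable_at_within
        mem_ball_0 less_imp_le)
  ultimately have "(\<phi> has_field_derivative
      1 / (2 * of_real pi * \<i>) * contour_integral (circlepath 0 r) (\<lambda>w. \<phi> w / (w - 0)\<^sup>2)) (at 0)"
    using assms(1) by (intro Cauchy_derivative_integral_circlepath(2)) simp_all
  moreover have "(\<phi> has_field_derivative cpartial u a z) (at 0)"
    using d[of 0] assms(1) by simp
  ultimately show ?thesis
    unfolding \<phi>_def using DERIV_unique by fastforce
qed

lemma continuous_on_cpartial:
  assumes "open S" and "\<And>z. z \<in> S \<Longrightarrow> holo_at u z"
  shows "continuous_on S (cpartial u a)"
proof (rule continuous_at_imp_continuous_on, rule ballI)
  fix z0 assume "z0 \<in> S"
  then obtain e where "e > 0" and e: "cball z0 e \<subseteq> S"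
    using assms(1) open_contains_cball by blast
  define r where "r = e / 2"
  have "r > 0"
    using \<open>e > 0\<close> by (simp add: r_def)
  have near: "z + axis a w \<in> S" if "z \<in> ball z0 r" and "norm w \<le> r" for z w
  proof -
    have "dist z0 (z + axis a w) \<le> dist z0 z + norm w"
      by (metis dist_norm dist_triangle2 add_diff_cancel_left' norm_axis)
    then show ?thesis
      using that e by (auto simp: r_def)
  qed
  have "continuous_on S u"
    using assms(2) holo_at_continuous continuous_at_imp_continuous_on by blast
  then have "continuous_on (ball z0 r \<times> sphere 0 r) (\<lambda>(z, w). u (z + axis a w) / w\<^sup>2)"
    using \<open>r > 0\<close> near
    by (auto simp: split_beta intro!: continuous_intros continuous_on_compose2[of S u]
        bounded_linear.continuous_on[OF bounded_linear_axis])
  then have "continuous_on (ball z0 r)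
      (\<lambda>z. contour_integral (circlepath 0 r) (\<lambda>w. u (z + axis a w) / w\<^sup>2) / (2 * of_real pi * \<i>))"
    using \<open>r > 0\<close> by (intro continuous_intros continuous_on_circlepath_integral_param) simp_all
  moreover have "contour_integral (circlepath 0 r) (\<lambda>w. u (z + axis a w) / w\<^sup>2) / (2 * of_real pi * \<i>)
      = cpartial u a z" if "z \<in> ball z0 r" for z
    using \<open>r > 0\<close> near[OF that] assms(2) by (intro cpartial_eq_circlepath_integral[symmetric]) simp_all
  ultimately have "continuous_on (ball z0 r) (cpartial u a)"
    by (rule continuous_on_eq)
  then show "isCont (cpartial u a) z0"
    using \<open>r > 0\<close> by (simp add: continuous_on_eq_continuous_at)
qed

lemma holo_at_vec_nth_Euler:
  assumes "(F has_derivative L) (at x)" and "\<And>v. L (\<i> *s v) = \<i> *s L v" and "L x = F x"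
  shows "F x $ I = (\<Sum>J\<in>UNIV. x $ J * cpartial (\<lambda>y. F y $ I) J x)"
proof (rule holo_at_Euler)
  show "holo_at (\<lambda>y. F y $ I) x"
    using assms(1,2) by (rule holo_at_vec_nth)
  have "((\<lambda>y. F y $ I) has_derivative (\<lambda>v. L v $ I)) (at x)"
    by (rule bounded_linear.has_derivative[OF bounded_linear_vec_nth assms(1)])
  then have "frechet_derivative (\<lambda>y. F y $ I) (at x) = (\<lambda>v. L v $ I)"
    by (rule frechet_derivative_at[symmetric])
  then show "frechet_derivative (\<lambda>y. F y $ I) (at x) x = F x $ I"
    using assms(3) by simp
qed

lemma frechet_derivative_of_real_fun:
  assumes "K differentiable (at z)"
  shows "frechet_derivative (\<lambda>w. complex_of_real (K w)) (at z)
    = (\<lambda>v. complex_of_real (frechet_derivative K (at z) v))"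
  using has_derivative_of_real[OF frechet_derivative_works[THEN iffD1, OF assms]]
  by (rule frechet_derivative_at[symmetric])

definition kahler_rescale :: "(complex^'n \<Rightarrow> real) \<Rightarrow> (complex^'n \<Rightarrow> complex) \<Rightarrow> complex^'n \<Rightarrow> complex"
  where "kahler_rescale K u z = complex_of_real (exp (- K z / 2)) * u z"

lemma holo_at_kahler_rescale:
  fixes K :: "complex^'n \<Rightarrow> real"
  assumes dK: "K differentiable (at z)" and du: "u differentiable (at z)"
    and hol: "\<And>a. covDbar K u a z = 0"
  shows "holo_at (kahler_rescale K u) z"
proof -
  define DK where "DK = frechet_derivative K (at z)"
  define DU where "DU = frechet_derivative u (at z)"
  define c where "c = complex_of_real (exp (- K z / 2))"
  define E where "E = (\<lambda>v. c * DU v + complex_of_real (exp (- K z / 2) * (- DK v / 2)) * u z)"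
  have hK: "(K has_derivative DK) (at z)" and hu: "(u has_derivative DU) (at z)"
    using dK du frechet_derivative_works by (auto simp: DK_def DU_def)
  have "(kahler_rescale K u has_derivative E) (at z)"
    unfolding kahler_rescale_def E_def c_def
    by (rule derivative_eq_intros refl hK hu | simp add: fun_eq_iff algebra_simps)+
  moreover have "E (axis a \<i>) = \<i> * E (axis a 1)" for a
  proof -
    have "E (axis a \<i>) - \<i> * E (axis a 1) = - 2 * \<i> * c * covDbar K u a z"
      unfolding covDbar_def cwirt_def frechet_derivative_of_real_fun[OF dK] E_def c_def DK_def DU_def
      by (simp add: field_simps)
    then show ?thesis
      using hol by simp
  qed
  ultimately show ?thesis
    by (rule holo_atI)
qed

lemma exp_mult_kahler_rescale: "complex_of_real (exp (K z / 2)) * kahler_rescale K u z = u z"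
  by (simp add: kahler_rescale_def mult.assoc[symmetric] flip: of_real_mult exp_add)

lemma covD_exp_mult:
  fixes K :: "complex^'n \<Rightarrow> real"
  assumes dK: "K differentiable (at z)" and hol: "holo_at h z"
  shows "covD K (\<lambda>w. complex_of_real (exp (K w / 2)) * h w) a z = complex_of_real (exp (K z / 2))
    * (cpartial h a z + wirt (\<lambda>w. complex_of_real (K w)) a z * h z)"
proof -
  define DK where "DK = frechet_derivative K (at z)"
  define E where "E = (\<lambda>v. complex_of_real (exp (K z / 2) * (DK v / 2)) * h z
    + complex_of_real (exp (K z / 2)) * (\<Sum>b\<in>UNIV. v $ b * cpartial h b z))"
  have hK: "(K has_derivative DK) (at z)"
    using dK frechet_derivative_works by (auto simp: DK_def)
  have "((\<lambda>w. complex_of_real (exp (K w / 2)) * h w) has_derivative E) (at z)"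
    unfolding E_def
    by (rule derivative_eq_intros refl hK hol[unfolded holo_at_def] | simp add: fun_eq_iff algebra_simps)+
  then have "frechet_derivative (\<lambda>w. complex_of_real (exp (K w / 2)) * h w) (at z) = E"
    by (rule frechet_derivative_at[symmetric])
  moreover have "(\<Sum>b\<in>UNIV. axis a x $ b * cpartial h b z) = x * cpartial h a z" for x
    by (rule sum_axis_nth_mult)
  ultimately show ?thesis
    unfolding covD_def wirt_def frechet_derivative_of_real_fun[OF dK] DK_def[symmetric]
    by (simp add: E_def field_simps)
qed

lemma covD_eq_kahler_rescale:
  fixes K :: "complex^'n \<Rightarrow> real"
  assumes "K differentiable (at z)" and "holo_at (kahler_rescale K u) z"
  shows "covD K u a z = complex_of_real (exp (K z / 2))
    * (cpartial (kahler_rescale K u) a z + wirt (\<lambda>w. complex_of_real (K w)) a z * kahler_rescale K u z)"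
  using covD_exp_mult[OF assms, of a] by (simp add: exp_mult_kahler_rescale)

text \<open>Coordinates of C^(n+1) are indexed by \<open>'n option\<close>: \<open>None\<close> is the scale lambda and
  \<open>vtail\<close> extracts the remaining coordinates z.\<close>

definition vtail :: "'a^'n option \<Rightarrow> 'a^'n" where
  "vtail y = (\<chi> a. y $ Some a)"

definition cone_map :: "('k \<Rightarrow> complex^'n \<Rightarrow> complex) \<Rightarrow> complex^'n option \<Rightarrow> complex^'k" where
  "cone_map h y = (\<chi> I. y $ None * h I (vtail y))"

definition cone_map_deriv ::
    "('k \<Rightarrow> complex^'n \<Rightarrow> complex) \<Rightarrow> complex^'n option \<Rightarrow> complex^'n option \<Rightarrow> complex^'k" where
  "cone_map_deriv h y w = (\<chi> I. w $ None * h I (vtail y)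
     + y $ None * (\<Sum>a\<in>UNIV. w $ Some a * cpartial (h I) a (vtail y)))"

lemma bounded_linear_vtail: "bounded_linear (vtail :: 'a::euclidean_space^'n option \<Rightarrow> 'a^'n)"
  unfolding linear_conv_bounded_linear[symmetric] vtail_def
  by (rule linearI) (auto simp: vec_eq_iff)

lemma has_derivative_cone_map:
  assumes "\<And>I. holo_at (h I) (vtail y)"
  shows "(cone_map h has_derivative cone_map_deriv h y) (at y)"
proof (rule has_derivative_vecI)
  fix I
  have "((\<lambda>y. h I (vtail y)) has_derivative
      (\<lambda>w. \<Sum>a\<in>UNIV. vtail w $ a * cpartial (h I) a (vtail y))) (at y)"
    using has_derivative_compose[OF bounded_linear.has_derivative[OF bounded_linear_vtail has_derivative_ident]
        assms[unfolded holo_at_def]]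
    by (simp add: o_def)
  with bounded_linear.has_derivative[OF bounded_linear_vec_nth has_derivative_ident]
  have "((\<lambda>y. y $ None * h I (vtail y)) has_derivative
      (\<lambda>w. y $ None * (\<Sum>a\<in>UNIV. vtail w $ a * cpartial (h I) a (vtail y)) + w $ None * h I (vtail y))) (at y)"
    by (rule has_derivative_mult)
  then show "((\<lambda>y. cone_map h y $ I) has_derivative (\<lambda>w. cone_map_deriv h y w $ I)) (at y)"
    by (simp add: cone_map_def cone_map_deriv_def vtail_def add.commute[of "y $ None * _"])
qed

lemma cone_map_deriv_scale: "cone_map_deriv h y (c *s w) = c *s cone_map_deriv h y w"
  by (simp add: cone_map_deriv_def vec_eq_iff sum_distrib_left algebra_simps)

lemma cone_map_deriv_radial: "cone_map_deriv h y (axis None (y $ None)) = cone_map h y"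
  by (simp add: cone_map_deriv_def cone_map_def vec_eq_iff axis_def)

lemma linear_cone_map_deriv: "linear (cone_map_deriv h y)"
proof (rule linearI)
  show "cone_map_deriv h y (v + w) = cone_map_deriv h y v + cone_map_deriv h y w" for v w
    by (simp add: cone_map_deriv_def vec_eq_iff sum.distrib algebra_simps)
  show "cone_map_deriv h y (r *\<^sub>R w) = r *\<^sub>R cone_map_deriv h y w" for r w
  proof -
    have "r *\<^sub>R w = complex_of_real r *s w"
      and "r *\<^sub>R cone_map_deriv h y w = complex_of_real r *s cone_map_deriv h y w"
      by (simp_all add: vec_eq_iff complex_eq_iff)
    then show ?thesis
      by (simp add: cone_map_deriv_scale)
  qed
qed

lemma continuous_on_cone_map_deriv:
  assumes "open U" and "\<And>z I. z \<in> U \<Longrightarrow> holo_at (h I) z"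
  shows "continuous_on (vtail -` U) (\<lambda>y. cone_map_deriv h y w)"
proof -
  have vtail: "continuous_on (vtail -` U) vtail" "vtail ` (vtail -` U) \<subseteq> U"
    by (auto intro: linear_continuous_on bounded_linear_vtail)
  have "continuous_on U (h I)" for I
    using assms(2) by (intro continuous_at_imp_continuous_on ballI holo_at_continuous)
  moreover have "continuous_on U (cpartial (h I) a)" for I a
    using assms by (rule continuous_on_cpartial)
  ultimately have "continuous_on (vtail -` U) (\<lambda>y. h I (vtail y))"
    and "continuous_on (vtail -` U) (\<lambda>y. cpartial (h I) a (vtail y))" for I a
    by (auto intro: continuous_on_compose2[OF _ vtail])
  then show ?thesis
    unfolding cone_map_deriv_def by (intro continuous_intros)
qed

definition cone_point :: "(complex^'n \<Rightarrow> real) \<Rightarrow> complex^'n \<Rightarrow> complex^'n option" where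
  "cone_point K z = (\<chi> I. case I of None \<Rightarrow> complex_of_real (exp (K z / 2)) | Some a \<Rightarrow> z $ a)"

lemma vtail_cone_point [simp]: "vtail (cone_point K z) = z"
  by (simp add: vtail_def cone_point_def vec_eq_iff)

lemma cone_point_None [simp]: "cone_point K z $ None = complex_of_real (exp (K z / 2))"
  by (simp add: cone_point_def)

lemma cone_map_cone_point:
  "cone_map (\<lambda>I. kahler_rescale K (\<lambda>w. X w $ I)) (cone_point K z) = X z"
  by (simp add: cone_map_def vec_eq_iff) (simp add: cone_point_def exp_mult_kahler_rescale)

lemma continuous_on_cone_point:
  fixes K :: "complex^'n \<Rightarrow> real"
  assumes "continuous_on U K"
  shows "continuous_on U (cone_point K)"
  unfolding cone_point_def
proof (intro continuous_on_vec_lambda)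
  fix I :: "'n option"
  show "continuous_on U (\<lambda>z. case I of None \<Rightarrow> complex_of_real (exp (K z / 2)) | Some a \<Rightarrow> z $ a)"
    using assms by (cases I) (auto intro!: continuous_intros)
qed

lemma inj_cone_map_deriv_cone_point:
  fixes K :: "complex^'n \<Rightarrow> real" and X :: "complex^'n \<Rightarrow> complex^'n option"
  assumes dK: "K differentiable (at p)"
    and hol: "\<And>I. holo_at (kahler_rescale K (\<lambda>w. X w $ I)) p"
    and det: "det (XMatrix K X p) \<noteq> 0"
  shows "inj (cone_map_deriv (\<lambda>I. kahler_rescale K (\<lambda>w. X w $ I)) (cone_point K p))"
proof -
  define h where "h I = kahler_rescale K (\<lambda>w. X w $ I)" for I
  define l where "l = complex_of_real (exp (K p / 2))"
  define wK where "wK a = wirt (\<lambda>w. complex_of_real (K w)) a p" for a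
  have "l \<noteq> 0"
    by (simp add: l_def)
  have M_None: "XMatrix K X p $ None $ j = l * h j p" for j
    by (simp add: XMatrix_def h_def l_def exp_mult_kahler_rescale)
  have M_Some: "XMatrix K X p $ Some a $ j = l * (cpartial (h j) a p + wK a * h j p)" for a j
    using covD_eq_kahler_rescale[OF dK hol] by (simp add: XMatrix_def h_def l_def wK_def)
  have "w = 0" if ker: "cone_map_deriv h (cone_point K p) w = 0" for w
  proof -
    define S where "S = (\<Sum>a\<in>UNIV. w $ Some a * wK a)"
    \<comment> \<open>the combination of the rows of \<open>XMatrix\<close> that reproduces the differential applied to \<open>w\<close>\<close>
    define c where "c = (\<chi> r. case r of None \<Rightarrow> w $ None / l - S | Some a \<Rightarrow> w $ Some a)"
    have "(c v* XMatrix K X p) $ j = cone_map_deriv h (cone_point K p) w $ j" for j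
    proof -
      have "(c v* XMatrix K X p) $ j = (w $ None / l - S) * (l * h j p)
          + (\<Sum>a\<in>UNIV. w $ Some a * (l * (cpartial (h j) a p + wK a * h j p)))"
        by (simp add: vector_matrix_mult_def UNIV_option_conv sum.reindex c_def M_None M_Some mult.commute)
      also have "\<dots> = w $ None * h j p + l * (\<Sum>a\<in>UNIV. w $ Some a * cpartial (h j) a p)"
        using \<open>l \<noteq> 0\<close>
        by (simp add: S_def sum.distrib sum_distrib_left sum_distrib_right field_simps)
      also have "\<dots> = cone_map_deriv h (cone_point K p) w $ j"
        by (simp add: cone_map_deriv_def l_def)
      finally show ?thesis .
    qed
    then have "c v* XMatrix K X p = 0"
      using ker by (simp add: vec_eq_iff)
    then have "c = 0"
      by (rule vector_matrix_mult_eq_0_imp_eq_0[OF det])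
    then have "c $ Some a = 0" and "c $ None = 0" for a
      by simp_all
    then have w_Some: "w $ Some a = 0" and "w $ None / l = S" for a
      by (simp_all add: c_def)
    moreover have "w $ None = 0"
      using \<open>w $ None / l = S\<close> \<open>l \<noteq> 0\<close> by (simp add: S_def w_Some)
    ultimately show "w = 0"
      by (metis option.exhaust vec_eq_iff zero_index)
  qed
  then show ?thesis
    using linear_injective_0[OF linear_cone_map_deriv] unfolding h_def by blast
qed

lemma cone_map_local_factorization:
  fixes h f :: "'n option \<Rightarrow> complex^'n \<Rightarrow> complex"
  assumes "open U" and hol_h: "\<And>z I. z \<in> U \<Longrightarrow> holo_at (h I) z"
    and hol_f: "\<And>z I. z \<in> U \<Longrightarrow> holo_at (f I) z"
    and "vtail y0 \<in> U" and "inj (cone_map_deriv h y0)"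
  obtains S W Ft where "open S" "y0 \<in> S" "open W" "cone_map h ` S \<subseteq> W"
    "\<And>y. y \<in> S \<Longrightarrow> Ft (cone_map h y) = cone_map f y"
    "\<And>I. holo_on (\<lambda>x. Ft x $ I) W"
    "\<And>x I. x \<in> W \<Longrightarrow> Ft x $ I = (\<Sum>J\<in>UNIV. x $ J * cpartial (\<lambda>y. Ft y $ I) J x)"
proof -
  have "open (vtail -` U)"
    using \<open>open U\<close> by (intro continuous_open_vimage linear_continuous_at bounded_linear_vtail)
  moreover have "(cone_map h has_derivative cone_map_deriv h y) (at y)" if "y \<in> vtail -` U" for y
    using hol_h that by (intro has_derivative_cone_map) simp
  moreover have "continuous_on (vtail -` U) (\<lambda>y. cone_map_deriv h y w)" for w
    using \<open>open U\<close> hol_h by (rule continuous_on_cone_map_deriv)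
  ultimately obtain S W g where S: "open S" "S \<subseteq> vtail -` U" "y0 \<in> S" and "open W"
      and hom: "homeomorphism S W (cone_map h) g"
      and dg: "\<And>x. x \<in> W \<Longrightarrow> (g has_derivative inv (cone_map_deriv h (g x))) (at x)"
      and bij: "\<And>x. x \<in> W \<Longrightarrow> bij (cone_map_deriv h (g x))"
    using inverse_function_theorem_inj[of "vtail -` U" "cone_map h" "cone_map_deriv h" y0] assms(4,5)
    by blast
  define Ft where "Ft = cone_map f \<circ> g"
  define L where "L x = cone_map_deriv f (g x) \<circ> inv (cone_map_deriv h (g x))" for x
  have "g x \<in> S" if "x \<in> W" for x
    using hom that homeomorphism_image2 by blast
  then have dFt: "(Ft has_derivative L x) (at x)" if "x \<in> W" for x
    using has_derivative_compose[OF dg[OF that] has_derivative_cone_map[of f "g x"]] hol_f S(2) that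
    by (auto simp: Ft_def L_def o_def)
  have L_scale: "L x (c *s v) = c *s L x v" if "x \<in> W" for x c v
    using bij[OF that] by (simp add: L_def inv_scale_commute cone_map_deriv_scale)
  have L_radial: "L x x = Ft x" if "x \<in> W" for x
  proof -
    have "cone_map_deriv h (g x) (axis None (g x $ None)) = x"
      using hom that by (simp add: cone_map_deriv_radial homeomorphism_apply2)
    then have "inv (cone_map_deriv h (g x)) x = axis None (g x $ None)"
      using bij[OF that] by (metis bij_is_inj inv_f_f)
    then show ?thesis
      by (simp add: L_def Ft_def cone_map_deriv_radial)
  qed
  show thesis
  proof (rule that)
    show "open S" "y0 \<in> S" "open W"
      using S \<open>open W\<close> by simp_all
    show "cone_map h ` S \<subseteq> W"
      using hom by (simp add: homeomorphism_def)
    show "Ft (cone_map h y) = cone_map f y" if "y \<in> S" for y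
      using hom that by (simp add: Ft_def homeomorphism_apply1)
    show "holo_on (\<lambda>x. Ft x $ I) W" for I
      by (intro holo_onI holo_at_vec_nth[OF dFt] L_scale)
    show "Ft x $ I = (\<Sum>J\<in>UNIV. x $ J * cpartial (\<lambda>y. Ft y $ I) J x)" if "x \<in> W" for x I
      using dFt[OF that] L_scale[OF that] L_radial[OF that] by (rule holo_at_vec_nth_Euler)
  qed
qed

theorem lemma5:
  fixes U :: "(complex^'n) set"
    and K :: "complex^'n \<Rightarrow> real"
    and X F :: "complex^'n \<Rightarrow> complex^'n option"
  assumes U_open: "open U"
    and K_diff: "\<forall>z\<in>U. K differentiable (at z)"
    and K_diff2: "\<forall>z\<in>U. \<forall>b. (\<lambda>w. cwirt (\<lambda>u. complex_of_real (K u)) b w) differentiable (at z)"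
    and Kahler: "\<forall>z\<in>U. \<forall>v::complex^'n. v \<noteq> 0 \<longrightarrow>
        0 < Re (\<Sum>a\<in>UNIV. \<Sum>b\<in>UNIV.
               wirt (\<lambda>w. cwirt (\<lambda>u. complex_of_real (K u)) b w) a z * v $ a * cnj (v $ b))"
    and X_diff: "\<forall>z\<in>U. \<forall>I. (\<lambda>w. X w $ I) differentiable (at z)"
    and F_diff: "\<forall>z\<in>U. \<forall>I. (\<lambda>w. F w $ I) differentiable (at z)"
    and X0: "\<forall>z\<in>U. X z $ None \<noteq> 0"
    and det_nz: "\<forall>z\<in>U. det (XMatrix K X z) \<noteq> 0"
    and X_hol: "\<forall>z\<in>U. \<forall>a I. covDbar K (\<lambda>w. X w $ I) a z = 0"
    and F_hol: "\<forall>z\<in>U. \<forall>a I. covDbar K (\<lambda>w. F w $ I) a z = 0"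
  shows "\<forall>p\<in>U. \<exists>V W (Ft :: complex^'n option \<Rightarrow> complex^'n option).
           open V \<and> p \<in> V \<and> V \<subseteq> U \<and> open W \<and> X ` V \<subseteq> W \<and>
           (\<forall>I. holo_on (\<lambda>x. Ft x $ I) W) \<and>
           (\<forall>z\<in>V. Ft (X z) = F z) \<and>
           (\<forall>x\<in>W. \<forall>I. Ft x $ I = (\<Sum>J\<in>UNIV. x $ J * cpartial (\<lambda>y. Ft y $ I) J x))"
proof (intro ballI)
  fix p assume "p \<in> U"
  define h where "h = (\<lambda>I. kahler_rescale K (\<lambda>w. X w $ I))"
  define f where "f = (\<lambda>I. kahler_rescale K (\<lambda>w. F w $ I))"
  have hol_h: "holo_at (h I) z" and hol_f: "holo_at (f I) z" if "z \<in> U" for z I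
    unfolding h_def f_def using K_diff X_diff F_diff X_hol F_hol that
    by (auto intro: holo_at_kahler_rescale)
  have vtail_p: "vtail (cone_point K p) \<in> U"
    using \<open>p \<in> U\<close> by simp
  have inj_p: "inj (cone_map_deriv h (cone_point K p))"
    unfolding h_def
    using K_diff det_nz hol_h[OF \<open>p \<in> U\<close>, unfolded h_def] \<open>p \<in> U\<close>
    by (intro inj_cone_map_deriv_cone_point) simp_all
  obtain S W Ft where "open S" "cone_point K p \<in> S" "open W" "cone_map h ` S \<subseteq> W"
      and "\<And>y. y \<in> S \<Longrightarrow> Ft (cone_map h y) = cone_map f y"
      and "\<And>I. holo_on (\<lambda>x. Ft x $ I) W"
      and "\<And>x I. x \<in> W \<Longrightarrow> Ft x $ I = (\<Sum>J\<in>UNIV. x $ J * cpartial (\<lambda>y. Ft y $ I) J x)"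
  proof (rule cone_map_local_factorization[where h = h and f = f])
  qed (rule U_open hol_h hol_f vtail_p inj_p that | assumption)+
  moreover have "X z = cone_map h (cone_point K z)" and "F z = cone_map f (cone_point K z)" for z
    by (simp_all add: h_def f_def cone_map_cone_point)
  moreover have "continuous_on U (cone_point K)"
    using K_diff by (intro continuous_on_cone_point continuous_at_imp_continuous_on ballI
        differentiable_imp_continuous_within) simp
  then have "open (U \<inter> cone_point K -` S)"
    using U_open \<open>open S\<close> by (rule continuous_open_preimage)
  ultimately show "\<exists>V W (Ft :: complex^'n option \<Rightarrow> complex^'n option).
      open V \<and> p \<in> V \<and> V \<subseteq> U \<and> open W \<and> X ` V \<subseteq> W \<and>
      (\<forall>I. holo_on (\<lambda>x. Ft x $ I) W) \<and> (\<forall>z\<in>V. Ft (X z) = F z) \<and>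
      (\<forall>x\<in>W. \<forall>I. Ft x $ I = (\<Sum>J\<in>UNIV. x $ J * cpartial (\<lambda>y. Ft y $ I) J x))"
    using \<open>p \<in> U\<close> by (intro exI[of _ "U \<inter> cone_point K -` S"] exI[of _ W] exI[of _ Ft]) auto
qed

end
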